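(* Let $n\ge4$, $k=3$, and let $d$ be an integer. Then every allowable critical data set for type $(n,d,3)$ satisfies $C_{12}>0$.
   Context: Let $0<k<n$ and $d$ be integers. Write $d=na-t$ with integers $a,t$, $0\le t<n$, and $ka=l(n-k)+t+m$ with integers $l,m$, $0\le m<n-k$. A critical data set for type $(n,d,k)$ is a tuple $A_c=(\alpha_c,n_1,d_1,k_1,n_2,d_2,k_2)$ with integers $n_i\ge1$, $k_i\ge0$, $d_i$ such that $n_1+n_2=n$, $d_1+d_2=d$, $k_1+k_2=k$, $\frac{d_2}{n_2}>\frac{d_1}{n_1}$, $\frac{k_1}{n_1}>\frac{k_2}{n_2}$, and $\alpha_c=\frac{d_2n_1-d_1n_2}{n_2k_1-n_1k_2}$. It is allowable if moreover $\frac tk<\alpha_c<\frac{ln+t}{k}$, $d\ge\frac1k(n^2-1)-(n-k)$, $d_1\ge\frac1{k_1}(n_1^2-1)-(n_1-k_1)$, and either ($k_2=0$ and $n_2=1$) or ($k_2\ge1$ and $d_2\ge\frac1{k_2}(n_2^2-1)-(n_2-k_2)$). Define $C_{12}=-n_1n_2-d_2n_1+d_1n_2+k_1(d_2+n_2-k_2)$. *)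

theory Defs
  imports Complex_Main
begin

definition par_a :: "int \<Rightarrow> int \<Rightarrow> int" where
  "par_a n d = - ((- d) div n)"
definition par_t :: "int \<Rightarrow> int \<Rightarrow> int" where
  "par_t n d = (- d) mod n"
(* k*a = l*(n-k) + t + m with 0 <= m < n-k *)
definition par_l :: "int \<Rightarrow> int \<Rightarrow> int \<Rightarrow> int" where
  "par_l n d k = (k * par_a n d - par_t n d) div (n - k)"
definition par_m :: "int \<Rightarrow> int \<Rightarrow> int \<Rightarrow> int" where
  "par_m n d k = (k * par_a n d - par_t n d) mod (n - k)"

lemma par_at: "n > 0 \<Longrightarrow> d = n * par_a n d - par_t n d \<and> 0 \<le> par_t n d \<and> par_t n d < n"
  unfolding par_a_def par_t_def
  by (smt (verit) minus_mult_div_eq_mod mult_minus_right pos_mod_bound pos_mod_sign)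

definition critical_data_set ::
  "int \<Rightarrow> int \<Rightarrow> int \<Rightarrow> real \<Rightarrow> int \<Rightarrow> int \<Rightarrow> int \<Rightarrow> int \<Rightarrow> int \<Rightarrow> int \<Rightarrow> bool" where
  "critical_data_set n d k \<alpha> n1 d1 k1 n2 d2 k2 \<longleftrightarrow>
     n1 \<ge> 1 \<and> n2 \<ge> 1 \<and> k1 \<ge> 0 \<and> k2 \<ge> 0 \<and>
     n1 + n2 = n \<and> d1 + d2 = d \<and> k1 + k2 = k \<and>
     real_of_int d2 / real_of_int n2 > real_of_int d1 / real_of_int n1 \<and>
     real_of_int k1 / real_of_int n1 > real_of_int k2 / real_of_int n2 \<and>
     \<alpha> = real_of_int (d2 * n1 - d1 * n2) / real_of_int (n2 * k1 - n1 * k2)"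

definition allowable ::
  "int \<Rightarrow> int \<Rightarrow> int \<Rightarrow> real \<Rightarrow> int \<Rightarrow> int \<Rightarrow> int \<Rightarrow> int \<Rightarrow> int \<Rightarrow> int \<Rightarrow> bool" where
  "allowable n d k \<alpha> n1 d1 k1 n2 d2 k2 \<longleftrightarrow>
     critical_data_set n d k \<alpha> n1 d1 k1 n2 d2 k2 \<and>
     real_of_int (par_t n d) / real_of_int k < \<alpha> \<and>
     \<alpha> < real_of_int (par_l n d k * n + par_t n d) / real_of_int k \<and>
     real_of_int d \<ge> (real_of_int n ^ 2 - 1) / real_of_int k - real_of_int (n - k) \<and>
     real_of_int d1 \<ge> (real_of_int n1 ^ 2 - 1) / real_of_int k1 - real_of_int (n1 - k1) \<and>
     ((k2 = 0 \<and> n2 = 1) \<or>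
      (k2 \<ge> 1 \<and> real_of_int d2 \<ge> (real_of_int n2 ^ 2 - 1) / real_of_int k2 - real_of_int (n2 - k2)))"

definition C12 :: "int \<Rightarrow> int \<Rightarrow> int \<Rightarrow> int \<Rightarrow> int \<Rightarrow> int \<Rightarrow> int" where
  "C12 n1 d1 k1 n2 d2 k2 = - n1 * n2 - d2 * n1 + d1 * n2 + k1 * (d2 + n2 - k2)"

end

theory Submission
  imports Defs
begin

(* Write d = (n-3) s + m with 0 <= m < n-3; then (l n + t)/3 = s - m/3, and the upper bound on
   alpha_c becomes 3 (d1 - (n1 - k1) s) > k1 m: the first factor gets more than its share of d.
   Since k1/n1 > k2/n2, k1 is 1, 2 or 3, and in each case a positive multiple of C12 is a sum of
   nonnegative terms coming from this inequality and the lower bounds on d1 and d2, plus a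
   positive constant; a few small ranks are checked directly. *)

definition nonempty_bound :: "int \<Rightarrow> int \<Rightarrow> int \<Rightarrow> bool" where
  "nonempty_bound n d k \<longleftrightarrow> n^2 - 1 - k * (n - k) \<le> k * d"

lemma nonempty_bound_iff:
  fixes n d k :: int
  assumes "k > 0"
  shows "real_of_int d \<ge> (real_of_int n ^ 2 - 1) / real_of_int k - real_of_int (n - k)
    \<longleftrightarrow> nonempty_bound n d k"
proof -
  have "real_of_int d \<ge> (real_of_int n ^ 2 - 1) / real_of_int k - real_of_int (n - k)
      \<longleftrightarrow> real_of_int (n^2 - 1 - k * (n - k)) \<le> real_of_int (k * d)"
    using assms by (simp add: field_simps)
  then show ?thesis
    unfolding nonempty_bound_def of_int_le_iff .
qed

lemma par_slope_decomposition:
  fixes n d k :: int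
  assumes "k < n"
  obtains s m where "d = (n - k) * s + m" "0 \<le> m" "m < n - k"
    "par_l n d k * n + par_t n d = k * s - m"
proof
  let ?a = "par_a n d" and ?t = "par_t n d" and ?l = "par_l n d k" and ?m = "par_m n d k"
  have d: "d = n * ?a - ?t"
    unfolding par_a_def par_t_def by (simp add: minus_div_mult_eq_mod [symmetric])
  have lm: "?l * (n - k) + ?m = k * ?a - ?t"
    unfolding par_l_def par_m_def by (rule div_mult_mod_eq)
  show "d = (n - k) * (?a + ?l) + ?m" and "?l * n + ?t = k * (?a + ?l) - ?m"
    using d lm by (simp_all add: algebra_simps)
  show "0 \<le> ?m" "?m < n - k"
    unfolding par_m_def using assms by simp_all
qed

lemma critical_data_set_slope_denominator_pos:
  assumes "critical_data_set n d k \<alpha> n1 d1 k1 n2 d2 k2"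
  shows "n2 * k1 - n1 * k2 > 0"
proof -
  have "real_of_int k2 / real_of_int n2 < real_of_int k1 / real_of_int n1"
    and "n1 \<ge> 1" "n2 \<ge> 1"
    using assms unfolding critical_data_set_def by auto
  then have "real_of_int (k2 * n1) < real_of_int (k1 * n2)"
    by (simp add: field_simps)
  then show ?thesis
    unfolding of_int_less_iff by (simp add: algebra_simps)
qed

lemma critical_data_set_k1_pos:
  assumes "critical_data_set n d k \<alpha> n1 d1 k1 n2 d2 k2"
  shows "k1 > 0"
proof (rule ccontr)
  assume "\<not> k1 > 0"
  then have "k1 = 0" "n1 * k2 \<ge> 0"
    using assms unfolding critical_data_set_def by auto
  then show False
    using critical_data_set_slope_denominator_pos [OF assms] by simp
qed

lemma critical_alpha_upper_bound:
  fixes s m :: int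
  assumes cds: "critical_data_set n d k \<alpha> n1 d1 k1 n2 d2 k2"
    and k: "k > 0" and d: "d = (n - k) * s + m"
    and \<alpha>: "\<alpha> < real_of_int (k * s - m) / real_of_int k"
  shows "k1 * m < k * (d1 - (n1 - k1) * s)"
proof -
  define e where "e = n2 * k1 - n1 * k2"
  have e: "e > 0"
    using critical_data_set_slope_denominator_pos [OF cds] unfolding e_def .
  have sums: "n1 + n2 = n" "d1 + d2 = d" "k1 + k2 = k" "n1 \<ge> 1" "n2 \<ge> 1"
    and \<alpha>_def: "\<alpha> = real_of_int (d2 * n1 - d1 * n2) / real_of_int e"
    using cds unfolding critical_data_set_def e_def by auto
  have "real_of_int (k * (d2 * n1 - d1 * n2)) < real_of_int (e * (k * s - m))"
    using \<alpha> k e unfolding \<alpha>_def by (simp add: field_simps)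
  then have "k * (d2 * n1 - d1 * n2) < e * (k * s - m)"
    by linarith
  moreover have d2: "d2 = (n1 + n2 - (k1 + k2)) * s + m - d1"
    using sums d by simp
  have "n * (k * (d1 - (n1 - k1) * s) - k1 * m) = e * (k * s - m) - k * (d2 * n1 - d1 * n2)"
    unfolding e_def d2 sums(1,3) [symmetric] by (simp add: algebra_simps)
  ultimately have "0 < n * (k * (d1 - (n1 - k1) * s) - k1 * m)"
    by linarith
  then show ?thesis
    using sums by (simp add: zero_less_mult_iff)
qed

lemma allowable_nonempty_bounds:
  assumes "allowable n d k \<alpha> n1 d1 k1 n2 d2 k2" "k > 0"
  shows "nonempty_bound n d k" "nonempty_bound n1 d1 k1"
    and "k2 = 0 \<Longrightarrow> n2 = 1" "k2 \<ge> 1 \<Longrightarrow> nonempty_bound n2 d2 k2"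
proof -
  have "k1 > 0"
    using assms(1) critical_data_set_k1_pos unfolding allowable_def by blast
  then show "nonempty_bound n d k" "nonempty_bound n1 d1 k1"
    and "k2 = 0 \<Longrightarrow> n2 = 1" "k2 \<ge> 1 \<Longrightarrow> nonempty_bound n2 d2 k2"
    using assms nonempty_bound_iff [where k = k] nonempty_bound_iff [where k = k1]
      nonempty_bound_iff [where k = k2] unfolding allowable_def by force+
qed

lemma allowable_d1_share:
  assumes allow: "allowable n d k \<alpha> n1 d1 k1 n2 d2 k2" and k: "0 < k" "k < n"
  obtains s m where "d1 + d2 = (n1 + n2 - k) * s + m" "0 \<le> m" "m < n1 + n2 - k"
    "k1 * m < k * (d1 - (n1 - k1) * s)"
proof -
  have cds: "critical_data_set n d k \<alpha> n1 d1 k1 n2 d2 k2"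
    and \<alpha>: "\<alpha> < real_of_int (par_l n d k * n + par_t n d) / real_of_int k"
    using allow unfolding allowable_def by blast+
  have sums: "n1 + n2 = n" "d1 + d2 = d"
    using cds unfolding critical_data_set_def by auto
  obtain s m where d: "d = (n - k) * s + m" "0 \<le> m" "m < n - k"
    and lt: "par_l n d k * n + par_t n d = k * s - m"
    using k(2) by (rule par_slope_decomposition)
  have "k1 * m < k * (d1 - (n1 - k1) * s)"
    using critical_alpha_upper_bound [OF cds k(1) d(1)] \<alpha> unfolding lt .
  with d show ?thesis
    using that unfolding sums by blast
qed

lemma C12_pos_k1_1:
  fixes n1 n2 d1 d2 s m :: int
  assumes n: "n1 \<ge> 1" "2 * n1 < n2" and d: "d1 + d2 = (n1 + n2 - 3) * s + m" "0 \<le> m"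
    and key: "m < 3 * (d1 - (n1 - 1) * s)"
    and bound: "nonempty_bound n2 d2 2"
  shows "C12 n1 d1 1 n2 d2 2 > 0"
proof -
  define r where "r = d1 - (n1 - 1) * s"
  have d2_eq: "d2 = (n1 + n2 - 3) * s + m - d1"
    using d(1) by simp
  have "m < 3 * r"
    using key unfolding r_def by simp
  then have r: "r \<ge> 1" "3 * r - 1 - m \<ge> 0"
    using d(2) by linarith+
  have d2: "2 * d2 - (n2 * n2 - 2 * n2 + 3) \<ge> 0"
    using bound unfolding nonempty_bound_def by (simp add: power2_eq_square algebra_simps)
  have "(n2 - 2) * C12 n1 d1 1 n2 d2 2
      = (n1 - 1) * (2 * d2 - (n2 * n2 - 2 * n2 + 3)) + (n1 - 1) * n2 * (3 * r - 1 - m)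
        + n2 * (n2 - 2 * n1) * (r - 1) + (n2 - 2) * (n2 - n1 - 1) + (n1 - 1)"
    unfolding C12_def r_def d2_eq by (simp add: algebra_simps)
  moreover have "(n2 - 2) * (n2 - n1 - 1) > 0"
    using n by (simp add: zero_less_mult_iff)
  moreover have "(n1 - 1) * (2 * d2 - (n2 * n2 - 2 * n2 + 3)) \<ge> 0"
    "(n1 - 1) * n2 * (3 * r - 1 - m) \<ge> 0" "n2 * (n2 - 2 * n1) * (r - 1) \<ge> 0"
    using n r d2 by simp_all
  ultimately have "(n2 - 2) * C12 n1 d1 1 n2 d2 2 > 0"
    using n by linarith
  then show ?thesis
    using n by (simp add: zero_less_mult_iff)
qed

lemma C12_pos_k1_2_large:
  fixes n1 n2 d1 d2 s m :: int
  assumes n: "n1 \<ge> 2" "n2 \<ge> 3" "n1 < 2 * n2"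
    and d: "d1 + d2 = (n1 + n2 - 3) * s + m" "0 \<le> m"
    and key: "2 * m < 3 * (d1 - (n1 - 2) * s)"
    and bound: "nonempty_bound n2 d2 1"
  shows "C12 n1 d1 2 n2 d2 1 > 0"
proof -
  define r where "r = d1 - (n1 - 2) * s"
  have d2_eq: "d2 = (n1 + n2 - 3) * s + m - d1"
    using d(1) by simp
  have "2 * m < 3 * r"
    using key unfolding r_def .
  then have r: "r \<ge> 1" "3 * r - 1 - 2 * m \<ge> 0"
    using d(2) by linarith+
  have d2: "d2 - n2 * (n2 - 1) \<ge> 0"
    using bound unfolding nonempty_bound_def by (simp add: power2_eq_square algebra_simps)
  have "2 * (n2 - 1) * C12 n1 d1 2 n2 d2 1
      = 2 * (n1 - 2) * (d2 - n2 * (n2 - 1)) + (n1 - 2) * n2 * (3 * r - 1 - 2 * m)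
        + n2 * (2 * n2 - n1) * (r - 1) + 2 * (n2 - 1) * (n2 - 2)"
    unfolding C12_def r_def d2_eq by (simp add: algebra_simps)
  moreover have "2 * (n2 - 1) * (n2 - 2) > 0"
    using n by (simp add: zero_less_mult_iff)
  moreover have "2 * (n1 - 2) * (d2 - n2 * (n2 - 1)) \<ge> 0"
    "(n1 - 2) * n2 * (3 * r - 1 - 2 * m) \<ge> 0" "n2 * (2 * n2 - n1) * (r - 1) \<ge> 0"
    using n r d2 by simp_all
  ultimately have "2 * (n2 - 1) * C12 n1 d1 2 n2 d2 1 > 0"
    by linarith
  then show ?thesis
    using n by (simp add: zero_less_mult_iff)
qed

lemma C12_pos_k1_2:
  fixes n1 n2 d1 d2 s m :: int
  assumes n: "n1 \<ge> 1" "n1 < 2 * n2" "n1 + n2 \<ge> 4"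
    and d: "d1 + d2 = (n1 + n2 - 3) * s + m" "0 \<le> m" "m < n1 + n2 - 3"
    and key: "2 * m < 3 * (d1 - (n1 - 2) * s)"
    and bounds: "nonempty_bound n2 d2 1" "nonempty_bound n1 d1 2"
      "nonempty_bound (n1 + n2) (d1 + d2) 3"
  shows "C12 n1 d1 2 n2 d2 1 > 0"
proof -
  consider "n1 = 1" | "n1 \<ge> 2" "n2 = 2" | "n1 \<ge> 2" "n2 \<ge> 3"
    using n by linarith
  then show ?thesis
  proof cases
    case 1
    have "d1 \<ge> 1" "d2 \<ge> n2 * n2 - n2"
      using bounds(1,2) 1 unfolding nonempty_bound_def by (simp_all add: power2_eq_square)
    moreover have "C12 n1 d1 2 n2 d2 1 = n2 * d1 + d2 + n2 - 2"
      unfolding C12_def 1 by (simp add: algebra_simps)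
    moreover have "n2 * d1 \<ge> n2" "n2 \<ge> 3" "n2 * n2 \<ge> 0"
      using mult_left_mono [OF \<open>d1 \<ge> 1\<close>, of n2] n 1 by simp_all
    ultimately show ?thesis
      by linarith
  next
    case 2
    then consider "n1 = 2" | "n1 = 3"
      using n by linarith
    then show ?thesis
    proof cases
      case 1
      then have "d1 \<ge> 2"
        using bounds(2) unfolding nonempty_bound_def by simp
      then show ?thesis
        unfolding C12_def 1 \<open>n2 = 2\<close> by simp
    next
      case 3: 2
      have "d1 + d2 = 2 * s + m" "m \<le> 1" "d1 + d2 \<ge> 6" "2 * m < 3 * (d1 - s)"
        using d key bounds(3) 3 \<open>n2 = 2\<close> unfolding nonempty_bound_def by simp_all
      moreover have "C12 n1 d1 2 n2 d2 1 = s + 3 * (d1 - s) - m - 4"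
        using d(1) unfolding C12_def 3 \<open>n2 = 2\<close> by (simp add: algebra_simps)
      ultimately show ?thesis
        using d(2) by presburger
    qed
  next
    case 3
    then show ?thesis
      using C12_pos_k1_2_large n d key bounds(1) by blast
  qed
qed

lemma C12_pos_k1_3:
  fixes n1 d1 d2 s m :: int
  assumes "n1 \<ge> 2" "d1 + d2 = (n1 - 2) * s + m" "0 \<le> m"
    and key: "3 * m < 3 * (d1 - (n1 - 3) * s)"
  shows "C12 n1 d1 3 1 d2 0 > 0"
proof -
  have "s - d2 = d1 - (n1 - 3) * s - m"
    using assms(2) by (simp add: algebra_simps)
  then have "0 \<le> (n1 - 2) * (s - d2 - 1)"
    using assms(1) key by simp
  moreover have "C12 n1 d1 3 1 d2 0 = (n1 - 2) * (s - d2 - 1) + m + 1"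
    using assms(2) unfolding C12_def by (simp add: algebra_simps)
  ultimately show ?thesis
    using assms(3) by linarith
qed

theorem proposition7p1:
  fixes n d n1 d1 k1 n2 d2 k2 :: int and \<alpha> :: real
  assumes "n \<ge> 4"
    and "allowable n d 3 \<alpha> n1 d1 k1 n2 d2 k2"
  shows "C12 n1 d1 k1 n2 d2 k2 > 0"
proof -
  have cds: "critical_data_set n d 3 \<alpha> n1 d1 k1 n2 d2 k2"
    using assms(2) unfolding allowable_def by blast
  have e: "n2 * k1 - n1 * k2 > 0"
    using critical_data_set_slope_denominator_pos [OF cds] .
  have sums: "n1 + n2 = n" "d1 + d2 = d" "k1 + k2 = 3" "k2 \<ge> 0" "n1 \<ge> 1"
    using cds unfolding critical_data_set_def by auto
  obtain s m where d: "d1 + d2 = (n1 + n2 - 3) * s + m" "0 \<le> m" "m < n1 + n2 - 3"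
    and key: "k1 * m < 3 * (d1 - (n1 - k1) * s)"
    using allowable_d1_share [OF assms(2)] assms(1) by auto
  note bounds =
    allowable_nonempty_bounds [OF assms(2) zero_less_numeral, unfolded sums(1,2) [symmetric]]
  consider "k1 = 1" "k2 = 2" | "k1 = 2" "k2 = 1" | "k1 = 3" "k2 = 0"
    using sums critical_data_set_k1_pos [OF cds] by linarith
  then show ?thesis
  proof cases
    case 1
    then show ?thesis
      using C12_pos_k1_1 [OF sums(5) _ d(1,2)] key bounds e by simp
  next
    case 2
    then show ?thesis
      using C12_pos_k1_2 [OF sums(5) _ _ d] assms(1) key bounds e sums(1) by simp
  next
    case 3
    then show ?thesis
      using C12_pos_k1_3 [of n1 d1 d2 s m] assms(1) sums(1) d(1,2) key bounds by simp
  qed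
qed

end
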